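(* Let ${\bf c}=(c_1,\ldots,c_{n+1})$ be a tuple of nonnegative integers, let $\Pi_{n+1}({\bf c})$ be the graph on $[n+2]$ consisting of the path $1\to2\to\cdots\to n+2$ together with $c_i$ additional edges $(i,n+2)$ for each $i=1,\ldots,n+1$, and let ${\bf a}=(a_1,\ldots,a_{n+1},-\sum_i a_i)$ with $a_i\in\mathbb{Z}_{\ge0}$. Then the Ehrhart polynomial $t\mapsto\#\big(t\,\mathcal{F}_{\Pi_{n+1}({\bf c})}({\bf a})\cap\mathbb{Z}^{E}\big)=K_{\Pi_{n+1}({\bf c})}(t{\bf a})$ has positive coefficients.
   Context: $\mathcal{F}_H({\bf a})$ is the set of $f\in\mathbb{R}_{\ge0}^{E(H)}$ with outflow minus inflow at each vertex $k$ (other than the last) equal to $a_k$; $K_H({\bf a})$ is the number of its integer points, and $E=E(\Pi_{n+1}({\bf c}))$. *)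

theory Defs
  imports "HOL-Computational_Algebra.Polynomial"
begin

text \<open>A directed multigraph H on vertex set [N] = {1..N} is given by a finite set of
edge labels E together with tail and head maps.\<close>

definition netflow :: "'e set \<Rightarrow> ('e \<Rightarrow> nat) \<Rightarrow> ('e \<Rightarrow> nat) \<Rightarrow> ('e \<Rightarrow> int) \<Rightarrow> nat \<Rightarrow> int" where
  "netflow E tail head f k = (\<Sum>e\<in>{e\<in>E. tail e = k}. f e) - (\<Sum>e\<in>{e\<in>E. head e = k}. f e)"

definition integer_flows ::
  "'e set \<Rightarrow> ('e \<Rightarrow> nat) \<Rightarrow> ('e \<Rightarrow> nat) \<Rightarrow> nat \<Rightarrow> (nat \<Rightarrow> int) \<Rightarrow> ('e \<Rightarrow> int) set" where
  "integer_flows E tail head N a =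
     {f. (\<forall>e. e \<notin> E \<longrightarrow> f e = 0) \<and> (\<forall>e\<in>E. 0 \<le> f e) \<and>
         (\<forall>k\<in>{1..<N}. netflow E tail head f k = a k)}"

definition K_flow :: "'e set \<Rightarrow> ('e \<Rightarrow> nat) \<Rightarrow> ('e \<Rightarrow> nat) \<Rightarrow> nat \<Rightarrow> (nat \<Rightarrow> int) \<Rightarrow> nat" where
  "K_flow E tail head N a = card (integer_flows E tail head N a)"

text \<open>The graph Pi_{n+1}(c) on [n+2]: path edges PathE i = (i, i+1) for i = 1..n+1, and
for each i = 1..n+1 the c i extra edges ExtraE i j = (i, n+2), j < c i.\<close>

datatype pedge = PathE nat | ExtraE nat nat

definition Pi_edges :: "nat \<Rightarrow> (nat \<Rightarrow> nat) \<Rightarrow> pedge set" where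
  "Pi_edges n c = PathE ` {1..n+1} \<union> {ExtraE i j | i j. i \<in> {1..n+1} \<and> j < c i}"

fun Pi_tail :: "pedge \<Rightarrow> nat" where
  "Pi_tail (PathE i) = i"
| "Pi_tail (ExtraE i j) = i"

fun Pi_head :: "nat \<Rightarrow> pedge \<Rightarrow> nat" where
  "Pi_head n (PathE i) = i + 1"
| "Pi_head n (ExtraE i j) = n + 2"

end

theory Submission
  imports Defs "HOL-Computational_Algebra.Formal_Power_Series"
begin

text \<open>The flows are counted vertex by vertex, from the sink towards the source. If \<open>s\<close> units
  enter vertex \<open>k\<close>, the outflow \<open>s + t a\<^sub>k\<close> splits into \<open>x\<close> units on the path edge and a weak
  composition of the remaining \<open>s + t a\<^sub>k - x\<close> units into \<open>c\<^sub>k\<close> parts on the extra edges, so the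
  number \<open>S\<^sub>k(s)\<close> of completions satisfies
  \<open>S\<^sub>k(s) = \<Sum>\<^sub>x multichoose(c\<^sub>k, s + t a\<^sub>k - x) S\<^sub>k\<^sub>+\<^sub>1(x)\<close>.
  By induction \<open>S\<^sub>k(s) = \<Sum>\<^sub>l \<beta>\<^sub>l(t) multichoose(s + 1, l)\<close> with polynomials \<open>\<beta>\<^sub>l\<close>: Vandermonde's
  identity for multichoose numbers expresses the new \<open>\<beta>\<^sub>l\<close> through the old ones and the polynomials
  \<open>t \<mapsto> multichoose(t a, r)\<close>, which have nonnegative coefficients and, for \<open>a > 0\<close>, degree \<open>r\<close> with
  positive leading coefficient. A positivity property of the top diagonal of \<open>\<Sum>\<^sub>l \<beta>\<^sub>l(t) y\<^sup>l\<close> is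
  preserved by every step, and it forces all coefficients of \<open>K(t) = S\<^sub>1(0) = \<Sum>\<^sub>l \<beta>\<^sub>l(t)\<close> up to
  its degree to be positive.\<close>

section \<open>Multichoose numbers\<close>

text \<open>Multisets of size \<open>r\<close> over \<open>u\<close> elements; at \<open>u = r = 0\<close> the truncated subtraction
  still yields \<open>1\<close>.\<close>

definition multichoose :: "nat \<Rightarrow> nat \<Rightarrow> nat" where
  "multichoose u r = (u + r - 1) choose r"

lemma multichoose_0_right [simp]: "multichoose u 0 = 1"
  by (simp add: multichoose_def)

lemma multichoose_1_left [simp]: "multichoose (Suc 0) r = 1"
  by (simp add: multichoose_def)

lemma multichoose_0_left: "multichoose 0 r = (if r = 0 then 1 else 0)"
  by (simp add: multichoose_def)

lemma multichoose_Suc_commute: "multichoose (Suc p) q = multichoose (Suc q) p"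
  by (simp add: multichoose_def binomial_symmetric[of q "p + q", simplified] add.commute)

lemma of_nat_multichoose_gbinomial:
  "(of_nat (multichoose u r) :: 'a :: field_char_0) = (-1) ^ r * ((- of_nat u) gchoose r)"
proof (cases "u = 0 \<and> r = 0")
  case False
  have "of_nat r - (- of_nat u) - 1 = (of_nat (u + r - 1) :: 'a)"
    using False by auto
  then have "((- of_nat u) gchoose r) = (-1) ^ r * (of_nat (multichoose u r) :: 'a)"
    using gbinomial_negated_upper[of "- of_nat u :: 'a" r]
    by (simp add: multichoose_def binomial_gbinomial)
  then show ?thesis by (simp add: power_mult_distrib[symmetric])
qed (simp add: multichoose_def)

lemma of_nat_multichoose_pochhammer:
  "(of_nat (multichoose u r) :: 'a :: field_char_0) = pochhammer (of_nat u) r / fact r"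
proof (cases "u = 0 \<and> r = 0")
  case False
  have "of_nat (u + r - 1) - of_nat r + 1 = (of_nat u :: 'a)"
    using False by auto
  then show ?thesis
    using gbinomial_pochhammer'[of "of_nat (u + r - 1) :: 'a" r]
    by (simp add: multichoose_def binomial_gbinomial)
qed (simp add: multichoose_def)

lemma multichoose_Vandermonde:
  "(\<Sum>k\<le>n. multichoose u k * multichoose v (n - k)) = multichoose (u + v) n"
proof -
  have "real (\<Sum>k\<le>n. multichoose u k * multichoose v (n - k))
      = (\<Sum>k\<le>n. (-1) ^ n * (((- real u) gchoose k) * ((- real v) gchoose (n - k))))"
    unfolding of_nat_sum
  proof (rule sum.cong)
    fix k assume "k \<in> {..n}"
    then have "(-1 :: real) ^ k * (-1) ^ (n - k) = (-1) ^ n"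
      by (simp add: power_add[symmetric])
    then show "real (multichoose u k * multichoose v (n - k))
        = (-1) ^ n * (((- real u) gchoose k) * ((- real v) gchoose (n - k)))"
      by (simp add: of_nat_multichoose_gbinomial mult_ac)
  qed simp
  also have "\<dots> = (-1) ^ n * ((- real u - real v) gchoose n)"
    using gbinomial_Vandermonde[of "- real u" "- real v" n]
    by (simp add: sum_distrib_left[symmetric] atLeast0AtMost)
  also have "\<dots> = real (multichoose (u + v) n)"
    by (simp add: of_nat_multichoose_gbinomial)
  finally show ?thesis by linarith
qed

section \<open>Lattice points of a dilated simplex\<close>

definition simplex_points :: "'e set \<Rightarrow> nat \<Rightarrow> ('e \<Rightarrow> int) set" where
  "simplex_points A m =
     {h. (\<forall>e. e \<notin> A \<longrightarrow> h e = 0) \<and> (\<forall>e\<in>A. 0 \<le> h e) \<and> sum h A = int m}"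

lemma simplex_points_empty: "simplex_points {} m = (if m = 0 then {\<lambda>_. 0} else {})"
  by (auto simp: simplex_points_def)

lemma simplex_points_insert:
  assumes "finite A" "e \<notin> A"
  shows "simplex_points (insert e A) m
           = (\<Union>y\<le>m. (\<lambda>h. h(e := int y)) ` simplex_points A (m - y))"
proof (intro equalityI subsetI)
  fix h assume h: "h \<in> simplex_points (insert e A) m"
  then have nonneg: "0 \<le> h e" "\<forall>x\<in>A. 0 \<le> h x" and sum_h: "h e + sum h A = int m"
    using assms by (auto simp: simplex_points_def)
  have "0 \<le> sum h A" using nonneg by (auto intro: sum_nonneg)
  then have le: "nat (h e) \<le> m" using sum_h by linarith
  have "sum (h(e := 0)) A = sum h A" using assms by (intro sum.cong) auto
  then have "h(e := 0) \<in> simplex_points A (m - nat (h e))"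
    using h sum_h nonneg le assms by (auto simp: simplex_points_def)
  moreover have "h = (h(e := 0))(e := int (nat (h e)))" using nonneg by auto
  ultimately show "h \<in> (\<Union>y\<le>m. (\<lambda>h. h(e := int y)) ` simplex_points A (m - y))"
    using le by blast
next
  fix h assume "h \<in> (\<Union>y\<le>m. (\<lambda>h. h(e := int y)) ` simplex_points A (m - y))"
  then obtain y g where y: "y \<le> m" and g: "g \<in> simplex_points A (m - y)"
    and h: "h = g(e := int y)" by blast
  have "sum (g(e := int y)) A = sum g A" using assms by (intro sum.cong) auto
  then show "h \<in> simplex_points (insert e A) m"
    using g y assms by (auto simp: simplex_points_def h)
qed

lemma finite_simplex_points: "finite A \<Longrightarrow> finite (simplex_points A m)"
  by (induction A arbitrary: m rule: finite_induct)
     (simp_all add: simplex_points_empty simplex_points_insert)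

lemma card_simplex_points:
  "finite A \<Longrightarrow> card (simplex_points A m) = multichoose (card A) m"
proof (induction A arbitrary: m rule: finite_induct)
  case empty
  then show ?case by (simp add: simplex_points_empty multichoose_0_left)
next
  case (insert e A)
  let ?U = "\<lambda>y. (\<lambda>h. h(e := int y)) ` simplex_points A (m - y)"
  have inj: "inj_on (\<lambda>h. h(e := int y)) (simplex_points A (m - y))" for y
  proof (rule inj_onI)
    fix g g' assume "g \<in> simplex_points A (m - y)" "g' \<in> simplex_points A (m - y)"
      and "g(e := int y) = g'(e := int y)"
    then show "g = g'" using insert(2)
      by (simp add: simplex_points_def fun_eq_iff) metis
  qed
  have disjoint: "\<forall>y\<in>{..m}. \<forall>y'\<in>{..m}. y \<noteq> y' \<longrightarrow> ?U y \<inter> ?U y' = {}"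
    by (auto simp: fun_eq_iff) (metis of_nat_eq_iff)
  have "card (simplex_points (insert e A) m) = (\<Sum>y\<le>m. card (?U y))"
    unfolding simplex_points_insert[OF insert(1,2)]
    using insert(1)
    by (intro card_UN_disjoint[OF finite_atMost _ disjoint]) (simp add: finite_simplex_points)
  also have "\<dots> = (\<Sum>y\<le>m. multichoose 1 y * multichoose (card A) (m - y))"
    by (simp add: card_image[OF inj] insert.IH)
  also have "\<dots> = multichoose (card (insert e A)) m"
    using multichoose_Vandermonde[of 1 "card A" m] insert(1,2) by simp
  finally show ?case .
qed

definition nonneg_coeffs :: "'a :: linordered_idom poly \<Rightarrow> bool" where
  "nonneg_coeffs p \<longleftrightarrow> (\<forall>i. 0 \<le> coeff p i)"

lemma nonneg_coeffsD: "nonneg_coeffs p \<Longrightarrow> 0 \<le> coeff p i"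
  by (simp add: nonneg_coeffs_def)

lemma nonneg_coeffs_0 [simp]: "nonneg_coeffs 0"
  by (simp add: nonneg_coeffs_def)

lemma nonneg_coeffs_mult: "nonneg_coeffs p \<Longrightarrow> nonneg_coeffs q \<Longrightarrow> nonneg_coeffs (p * q)"
  by (auto simp: nonneg_coeffs_def coeff_mult intro!: sum_nonneg)

lemma nonneg_coeffs_smult: "0 \<le> c \<Longrightarrow> nonneg_coeffs p \<Longrightarrow> nonneg_coeffs (smult c p)"
  by (simp add: nonneg_coeffs_def)

lemma nonneg_coeffs_sum: "(\<And>x. x \<in> A \<Longrightarrow> nonneg_coeffs (f x)) \<Longrightarrow> nonneg_coeffs (sum f A)"
  by (auto simp: nonneg_coeffs_def coeff_sum intro!: sum_nonneg)

lemma nonneg_coeffs_prod: "(\<And>x. x \<in> A \<Longrightarrow> nonneg_coeffs (f x)) \<Longrightarrow> nonneg_coeffs (prod f A)"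
  by (induction A rule: infinite_finite_induct)
     (auto simp: nonneg_coeffs_def intro: nonneg_coeffs_mult[unfolded nonneg_coeffs_def, rule_format])

definition multichoose_poly :: "nat \<Rightarrow> nat \<Rightarrow> real poly" where
  "multichoose_poly a r = smult (1 / fact r) (\<Prod>j<r. [:of_nat j, of_nat a:])"

lemma poly_multichoose_poly: "poly (multichoose_poly a r) (real t) = real (multichoose (t * a) r)"
  by (simp add: multichoose_poly_def poly_prod of_nat_multichoose_pochhammer pochhammer_prod
      atLeast0LessThan add.commute mult.commute)

lemma nonneg_coeffs_multichoose_poly: "nonneg_coeffs (multichoose_poly a r)"
  unfolding multichoose_poly_def
  by (intro nonneg_coeffs_smult nonneg_coeffs_prod)
     (auto simp: nonneg_coeffs_def coeff_pCons split: nat.splits)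

lemma multichoose_poly_0_left: "multichoose_poly 0 r = (if r = 0 then 1 else 0)"
  by (cases r) (auto simp: multichoose_poly_def prod_zero)

lemma
  assumes "a > 0"
  shows degree_multichoose_poly: "degree (multichoose_poly a r) = r"
    and lead_coeff_multichoose_poly_pos: "coeff (multichoose_poly a r) r > 0"
proof -
  let ?P = "\<Prod>j<r. [:of_nat j, of_nat a:] :: real poly"
  have "degree ?P = r"
    using assms by (subst degree_prod_eq_sum_degree) auto
  moreover have "lead_coeff ?P = real a ^ r"
    using assms by (simp add: lead_coeff_prod)
  ultimately show "degree (multichoose_poly a r) = r" "coeff (multichoose_poly a r) r > 0"
    using assms by (simp_all add: multichoose_poly_def)
qed

section \<open>Transfer of weights and positivity on the top diagonal\<close>

definition transfer :: "(nat \<Rightarrow> real poly) \<Rightarrow> nat \<Rightarrow> nat \<Rightarrow> nat \<Rightarrow> nat \<Rightarrow> real poly" where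
  "transfer \<beta> m c a l = (\<Sum>i\<le>m. if l \<le> c + i then \<beta> i * multichoose_poly a (c + i - l) else 0)"

text \<open>Think of \<open>\<beta>\<close> as the bivariate polynomial \<open>\<Sum>l. \<beta> l (t) y^l\<close> of total degree at most
  \<open>m\<close> and \<open>t\<close>-degree at most \<open>D\<close>; the monomials \<open>t^j y^(m-j)\<close> on its top diagonal have positive
  coefficients for all \<open>j \<le> D\<close>.\<close>

definition diagonal_positive :: "(nat \<Rightarrow> real poly) \<Rightarrow> nat \<Rightarrow> nat \<Rightarrow> bool" where
  "diagonal_positive \<beta> m D \<longleftrightarrow>
     (\<forall>l. nonneg_coeffs (\<beta> l)) \<and> (\<forall>l>m. \<beta> l = 0) \<and> (\<forall>l\<le>m. degree (\<beta> l) \<le> m - l) \<and>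
     D \<le> m \<and> (\<forall>l. degree (\<beta> l) \<le> D) \<and> (\<forall>j\<le>D. coeff (\<beta> (m - j)) j > 0)"

lemma transfer_0: "transfer \<beta> m c 0 l = (if c \<le> l \<and> l - c \<le> m then \<beta> (l - c) else 0)"
proof -
  have "transfer \<beta> m c 0 l = (\<Sum>i\<le>m. if i = l - c \<and> c \<le> l then \<beta> i else 0)"
    unfolding transfer_def by (rule sum.cong) (auto simp: multichoose_poly_0_left)
  also have "\<dots> = (if c \<le> l \<and> l - c \<le> m then \<beta> (l - c) else 0)"
    by (cases "c \<le> l") auto
  finally show ?thesis .
qed

lemma diagonal_positive_transfer_0:
  "diagonal_positive \<beta> m D \<Longrightarrow> diagonal_positive (transfer \<beta> m c 0) (m + c) D"
  unfolding diagonal_positive_def transfer_0 by (intro conjI) auto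

lemma nonneg_coeffs_transfer:
  "(\<And>i. nonneg_coeffs (\<beta> i)) \<Longrightarrow> nonneg_coeffs (transfer \<beta> m c a l)"
  unfolding transfer_def
  by (auto intro!: nonneg_coeffs_sum nonneg_coeffs_mult nonneg_coeffs_multichoose_poly)

lemma transfer_eq_0: "l > m + c \<Longrightarrow> transfer \<beta> m c a l = 0"
  unfolding transfer_def by (intro sum.neutral) auto

lemma degree_transfer_le:
  assumes "a > 0" and "\<And>i. i \<le> m \<Longrightarrow> degree (\<beta> i) \<le> m - i"
  shows "degree (transfer \<beta> m c a l) \<le> m + c - l"
  unfolding transfer_def
proof (rule degree_sum_le)
  fix i assume i: "i \<in> {..m}"
  show "degree (if l \<le> c + i then \<beta> i * multichoose_poly a (c + i - l) else 0) \<le> m + c - l"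
  proof (cases "l \<le> c + i")
    case True
    have "degree (\<beta> i * multichoose_poly a (c + i - l))
        \<le> degree (\<beta> i) + degree (multichoose_poly a (c + i - l))"
      by (rule degree_mult_le)
    also have "\<dots> \<le> (m - i) + (c + i - l)"
      using assms i by (intro add_mono) (simp_all add: degree_multichoose_poly)
    also have "\<dots> = m + c - l"
      using i True by simp
    finally show ?thesis
      using True by simp
  qed simp
qed simp

text \<open>The top-diagonal coefficient of degree \<open>j\<close> is fed by the leading term of
  \<open>\<beta> (m - j')\<close>, \<open>j' = min j D\<close>, times the leading term of a multichoose polynomial.\<close>

lemma coeff_transfer_diagonal_pos:
  assumes \<beta>: "diagonal_positive \<beta> m D" and "a > 0" and j: "j \<le> m + c"
  shows "coeff (transfer \<beta> m c a (m + c - j)) j > 0"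
proof -
  note I = \<beta>[unfolded diagonal_positive_def]
  define j' where "j' = min j D"
  define i where "i = m - j'"
  have j': "j' \<le> D" "j' \<le> j" "j' \<le> m"
    using I by (auto simp: j'_def)
  have coeff_i: "coeff (\<beta> i) j' > 0"
    using I j' by (auto simp: i_def)
  have "degree (\<beta> i) \<le> m - i"
    using I by (simp add: i_def)
  also have "m - i = j'"
    using j' by (simp add: i_def)
  finally have degree_i: "degree (\<beta> i) = j'"
    using coeff_i le_degree[of "\<beta> i" j'] by fastforce
  have "coeff (\<beta> i * multichoose_poly a (j - j')) j
      = coeff (\<beta> i) j' * coeff (multichoose_poly a (j - j')) (j - j')"
    using coeff_mult_degree_sum[of "\<beta> i" "multichoose_poly a (j - j')"] degree_i j'
      degree_multichoose_poly[OF \<open>a > 0\<close>]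
    by simp
  also have "\<dots> > 0"
    using coeff_i lead_coeff_multichoose_poly_pos[OF \<open>a > 0\<close>] by simp
  also have "coeff (\<beta> i * multichoose_poly a (j - j')) j
      = coeff (if m + c - j \<le> c + i then \<beta> i * multichoose_poly a (c + i - (m + c - j)) else 0) j"
    using j j' by (simp add: i_def)
  also have "\<dots> \<le> (\<Sum>i'\<le>m. coeff (if m + c - j \<le> c + i'
                   then \<beta> i' * multichoose_poly a (c + i' - (m + c - j)) else 0) j)"
    using I by (intro member_le_sum)
       (auto simp: i_def intro!: nonneg_coeffsD nonneg_coeffs_mult nonneg_coeffs_multichoose_poly)
  also have "\<dots> = coeff (transfer \<beta> m c a (m + c - j)) j"
    by (simp add: transfer_def coeff_sum)
  finally show ?thesis .
qed

lemma diagonal_positive_transfer: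
  assumes "diagonal_positive \<beta> m D"
  shows "\<exists>D'. diagonal_positive (transfer \<beta> m c a) (m + c) D'"
proof (cases "a = 0")
  case True
  then show ?thesis using diagonal_positive_transfer_0[OF assms] by blast
next
  case False
  then have "a > 0" by simp
  note I = assms[unfolded diagonal_positive_def]
  have degree_le: "degree (transfer \<beta> m c a l) \<le> m + c - l" for l
    using I by (intro degree_transfer_le[OF \<open>a > 0\<close>]) auto
  have "diagonal_positive (transfer \<beta> m c a) (m + c) (m + c)"
    unfolding diagonal_positive_def
    using I degree_le coeff_transfer_diagonal_pos[OF assms \<open>a > 0\<close>]
    by (auto intro: nonneg_coeffs_transfer transfer_eq_0 order.trans[OF degree_le])
  then show ?thesis by blast
qed

lemma diagonal_positive_sum_coeff_pos:
  assumes "diagonal_positive \<beta> m D" and i: "i \<le> degree (\<Sum>l\<le>m. \<beta> l)"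
  shows "coeff (\<Sum>l\<le>m. \<beta> l) i > 0"
proof -
  note I = assms(1)[unfolded diagonal_positive_def]
  have "degree (\<Sum>l\<le>m. \<beta> l) \<le> D"
    using I by (intro degree_sum_le) auto
  then have "coeff (\<beta> (m - i)) i > 0"
    using I i by simp
  also have "coeff (\<beta> (m - i)) i \<le> (\<Sum>l\<le>m. coeff (\<beta> l) i)"
    using I by (intro member_le_sum) (auto intro: nonneg_coeffsD)
  finally show ?thesis by (simp add: coeff_sum)
qed

section \<open>Flows on the graph\<close>

definition extra_edges :: "(nat \<Rightarrow> nat) \<Rightarrow> nat \<Rightarrow> pedge set" where
  "extra_edges c k = ExtraE k ` {..<c k}"

definition edges_from :: "nat \<Rightarrow> (nat \<Rightarrow> nat) \<Rightarrow> nat \<Rightarrow> pedge set" where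
  "edges_from n c k = {e \<in> Pi_edges n c. k \<le> Pi_tail e}"

definition outflow :: "(nat \<Rightarrow> nat) \<Rightarrow> (pedge \<Rightarrow> int) \<Rightarrow> nat \<Rightarrow> int" where
  "outflow c f v = f (PathE v) + sum f (extra_edges c v)"

text \<open>Flows on the edges leaving the vertices \<open>k, \<dots>, n + 1\<close> when \<open>s\<close> units enter vertex \<open>k\<close>.\<close>

definition partial_flows ::
  "nat \<Rightarrow> (nat \<Rightarrow> nat) \<Rightarrow> (nat \<Rightarrow> nat) \<Rightarrow> nat \<Rightarrow> nat \<Rightarrow> (pedge \<Rightarrow> int) set" where
  "partial_flows n c b k s =
     {f. (\<forall>e. e \<notin> edges_from n c k \<longrightarrow> f e = 0) \<and> (\<forall>e\<in>edges_from n c k. 0 \<le> f e) \<and>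
         (\<forall>v\<in>{k..n+1}. outflow c f v = int (b v) + (if v = k then int s else f (PathE (v - 1))))}"

lemma mem_Pi_edges [simp]:
  "PathE i \<in> Pi_edges n c \<longleftrightarrow> 1 \<le> i \<and> i \<le> n + 1"
  "ExtraE i j \<in> Pi_edges n c \<longleftrightarrow> 1 \<le> i \<and> i \<le> n + 1 \<and> j < c i"
  by (auto simp: Pi_edges_def)

lemma mem_edges_from [simp]:
  "PathE i \<in> edges_from n c k \<longleftrightarrow> 1 \<le> i \<and> i \<le> n + 1 \<and> k \<le> i"
  "ExtraE i j \<in> edges_from n c k \<longleftrightarrow> 1 \<le> i \<and> i \<le> n + 1 \<and> j < c i \<and> k \<le> i"
  by (auto simp: edges_from_def)

lemma mem_extra_edges [simp]:
  "PathE i \<notin> extra_edges c k"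
  "ExtraE i j \<in> extra_edges c k \<longleftrightarrow> i = k \<and> j < c k"
  by (auto simp: extra_edges_def)

lemma finite_extra_edges [simp]: "finite (extra_edges c k)"
  by (simp add: extra_edges_def)

lemma card_extra_edges [simp]: "card (extra_edges c k) = c k"
  by (simp add: extra_edges_def card_image inj_on_def)

lemma edges_from_1: "edges_from n c 1 = Pi_edges n c"
  by (auto simp: edges_from_def Pi_edges_def)

lemma edges_from_empty: "n + 2 \<le> k \<Longrightarrow> edges_from n c k = {}"
  by (auto simp: edges_from_def Pi_edges_def)

lemma mem_edges_from_iff:
  assumes "k \<in> {1..n+1}"
  shows "e \<in> edges_from n c k \<longleftrightarrow> e = PathE k \<or> e \<in> extra_edges c k \<or> e \<in> edges_from n c (Suc k)"
proof (cases e)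
  case (ExtraE i j)
  then show ?thesis using assms by (cases "i = k") auto
qed (use assms in auto)

lemma extra_edges_disjoint_edges_from_Suc: "e \<in> extra_edges c k \<Longrightarrow> e \<notin> edges_from n c (Suc k)"
  by (auto simp: extra_edges_def)

lemma netflow_Pi:
  assumes "v \<in> {1..n+1}"
  shows "netflow (Pi_edges n c) Pi_tail (Pi_head n) f v
           = outflow c f v - (if v = 1 then 0 else f (PathE (v - 1)))"
proof -
  have "e \<in> Pi_edges n c \<and> Pi_tail e = v \<longleftrightarrow> e \<in> insert (PathE v) (extra_edges c v)" for e
    using assms by (cases e) auto
  moreover have "e \<in> Pi_edges n c \<and> Pi_head n e = v \<longleftrightarrow> v \<noteq> 1 \<and> e = PathE (v - 1)" for e
    using assms by (cases e) auto
  ultimately have "{e \<in> Pi_edges n c. Pi_tail e = v} = insert (PathE v) (extra_edges c v)"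
    and "{e \<in> Pi_edges n c. Pi_head n e = v} = (if v = 1 then {} else {PathE (v - 1)})"
    by auto
  then show ?thesis
    by (simp add: netflow_def outflow_def)
qed

lemma integer_flows_eq_partial_flows:
  "integer_flows (Pi_edges n c) Pi_tail (Pi_head n) (n + 2) (\<lambda>k. int (b k)) = partial_flows n c b 1 0"
proof -
  have "{1..<n + 2} = {1..n + 1}" by auto
  then show ?thesis
    unfolding integer_flows_def partial_flows_def edges_from_1
    by (auto simp: netflow_Pi)
qed

lemma partial_flows_top: "n + 2 \<le> k \<Longrightarrow> partial_flows n c b k s = {\<lambda>_. 0}"
  by (auto simp: partial_flows_def edges_from_empty)

lemma outflow_cong:
  "f (PathE v) = g (PathE v) \<Longrightarrow> (\<And>e. e \<in> extra_edges c v \<Longrightarrow> f e = g e) \<Longrightarrow> outflow c f v = outflow c g v"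
  unfolding outflow_def by (auto intro: sum.cong)

lemma partial_flows_outflow_first:
  "f \<in> partial_flows n c b k s \<Longrightarrow> k \<in> {1..n+1} \<Longrightarrow> outflow c f k = int (b k) + int s"
  by (auto simp: partial_flows_def)

lemma restrict_extra_edges_in_simplex_points:
  assumes f: "f \<in> partial_flows n c b k s" and k: "k \<in> {1..n+1}" and x: "f (PathE k) = int x"
    and "x \<le> s + b k"
  shows "(\<lambda>e. if e \<in> extra_edges c k then f e else 0) \<in> simplex_points (extra_edges c k) (s + b k - x)"
proof -
  have "sum (\<lambda>e. if e \<in> extra_edges c k then f e else 0) (extra_edges c k) = sum f (extra_edges c k)"
    by (rule sum.cong) auto
  moreover have "\<forall>e\<in>extra_edges c k. 0 \<le> f e"
    using f k by (auto simp: partial_flows_def extra_edges_def)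
  ultimately show ?thesis
    using partial_flows_outflow_first[OF f k] x \<open>x \<le> s + b k\<close>
    by (auto simp: simplex_points_def outflow_def)
qed

lemma restrict_edges_from_Suc_in_partial_flows:
  assumes f: "f \<in> partial_flows n c b k s" and k: "k \<in> {1..n+1}" and x: "f (PathE k) = int x"
  shows "(\<lambda>e. if e \<in> edges_from n c (Suc k) then f e else 0) \<in> partial_flows n c b (Suc k) x"
proof -
  let ?g = "\<lambda>e. if e \<in> edges_from n c (Suc k) then f e else 0"
  have "outflow c ?g v = int (b v) + (if v = Suc k then int x else ?g (PathE (v - 1)))"
    if v: "v \<in> {Suc k..n+1}" for v
  proof -
    have "outflow c ?g v = outflow c f v"
      using v by (intro outflow_cong) (auto simp: extra_edges_def)
    also have "\<dots> = int (b v) + f (PathE (v - 1))"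
      using f v by (auto simp: partial_flows_def)
    finally show ?thesis
      using v x by auto
  qed
  moreover have "\<forall>e\<in>edges_from n c (Suc k). 0 \<le> f e"
    using f k by (auto simp: partial_flows_def mem_edges_from_iff)
  ultimately show ?thesis
    by (auto simp: partial_flows_def)
qed

lemma glue_in_partial_flows:
  assumes h: "h \<in> simplex_points (extra_edges c k) (s + b k - x)"
    and g: "g \<in> partial_flows n c b (Suc k) x"
    and k: "k \<in> {1..n+1}" and "x \<le> s + b k"
  shows "(\<lambda>e. if e = PathE k then int x else h e + g e) \<in> partial_flows n c b k s"
proof -
  let ?f = "\<lambda>e. if e = PathE k then int x else h e + g e"
  have h0: "\<And>e. e \<notin> extra_edges c k \<Longrightarrow> h e = 0" and h_nonneg: "\<And>e. 0 \<le> h e"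
    and h_sum: "sum h (extra_edges c k) = int (s + b k - x)"
    using h by (auto simp: simplex_points_def)
  have g0: "\<And>e. e \<notin> edges_from n c (Suc k) \<Longrightarrow> g e = 0" and g_nonneg: "\<And>e. 0 \<le> g e"
    and g_out: "\<And>v. v \<in> {Suc k..n+1} \<Longrightarrow>
      outflow c g v = int (b v) + (if v = Suc k then int x else g (PathE (v - 1)))"
    using g by (auto simp: partial_flows_def)
  have "outflow c ?f v = int (b v) + (if v = k then int s else ?f (PathE (v - 1)))"
    if v: "v \<in> {k..n+1}" for v
  proof (cases "v = k")
    case True
    have "sum ?f (extra_edges c k) = sum h (extra_edges c k)"
      using g0 extra_edges_disjoint_edges_from_Suc by (intro sum.cong) auto
    then show ?thesis
      using True h_sum \<open>x \<le> s + b k\<close> by (simp add: outflow_def)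
  next
    case False
    then have v': "v \<in> {Suc k..n+1}"
      using v by auto
    have "outflow c ?f v = outflow c g v"
      using False h0 by (intro outflow_cong) (auto simp: extra_edges_def)
    then show ?thesis
      using g_out[OF v'] False h0 by auto
  qed
  moreover have "?f e = 0" if "e \<notin> edges_from n c k" for e
    using that mem_edges_from_iff[OF k, of e] h0 g0 by auto
  ultimately show ?thesis
    using h_nonneg g_nonneg by (auto simp: partial_flows_def)
qed

lemma partial_flows_fiber_bij:
  assumes k: "k \<in> {1..n+1}" and x: "x \<le> s + b k"
  shows "bij_betw
     (\<lambda>f. (\<lambda>e. if e \<in> extra_edges c k then f e else 0,
           \<lambda>e. if e \<in> edges_from n c (Suc k) then f e else 0))
     {f \<in> partial_flows n c b k s. f (PathE k) = int x}
     (simplex_points (extra_edges c k) (s + b k - x) \<times> partial_flows n c b (Suc k) x)"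
    (is "bij_betw ?split ?A ?B")
proof (rule bij_betw_byWitness[where f' = "\<lambda>(h, g) e. if e = PathE k then int x else h e + g e"])
  show "\<forall>f\<in>?A. (\<lambda>(h, g) e. if e = PathE k then int x else h e + g e) (?split f) = f"
    using mem_edges_from_iff[OF k] extra_edges_disjoint_edges_from_Suc
    by (fastforce simp: partial_flows_def)
  show "\<forall>y\<in>?B. ?split ((\<lambda>(h, g) e. if e = PathE k then int x else h e + g e) y) = y"
    using extra_edges_disjoint_edges_from_Suc
    by (fastforce simp: simplex_points_def partial_flows_def)
qed (use assms restrict_extra_edges_in_simplex_points restrict_edges_from_Suc_in_partial_flows
         glue_in_partial_flows in auto)

lemma partial_flows_eq_UN_fibers:
  assumes k: "k \<in> {1..n+1}"
  shows "partial_flows n c b k s = (\<Union>x\<le>s + b k. {f \<in> partial_flows n c b k s. f (PathE k) = int x})"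
proof (intro equalityI subsetI)
  fix f assume f: "f \<in> partial_flows n c b k s"
  have nonneg: "\<forall>e\<in>edges_from n c k. 0 \<le> f e"
    using f by (simp add: partial_flows_def)
  then have "0 \<le> f (PathE k)" "0 \<le> sum f (extra_edges c k)"
    using k mem_edges_from_iff[OF k] by (auto intro: sum_nonneg)
  moreover have "f (PathE k) + sum f (extra_edges c k) = int (b k) + int s"
    using partial_flows_outflow_first[OF f k] by (simp add: outflow_def)
  ultimately have "nat (f (PathE k)) \<le> s + b k" and "f (PathE k) = int (nat (f (PathE k)))"
    by linarith+
  then show "f \<in> (\<Union>x\<le>s + b k. {f \<in> partial_flows n c b k s. f (PathE k) = int x})"
    using f by blast
qed auto

lemma finite_partial_flows: "1 \<le> k \<Longrightarrow> finite (partial_flows n c b k s)"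
proof (induction "n + 2 - k" arbitrary: k s)
  case 0
  then show ?case
    by (simp add: partial_flows_top)
next
  case (Suc d)
  then have k: "k \<in> {1..n+1}" by auto
  have "finite {f \<in> partial_flows n c b k s. f (PathE k) = int x}" if "x \<le> s + b k" for x
    using bij_betw_finite[OF partial_flows_fiber_bij[where s=s and b=b, OF k that]] Suc
    by (simp add: finite_simplex_points)
  then show ?case
    by (subst partial_flows_eq_UN_fibers[OF k]) auto
qed

lemma card_partial_flows_step:
  assumes k: "k \<in> {1..n+1}"
  shows "card (partial_flows n c b k s)
    = (\<Sum>x\<le>s + b k. multichoose (c k) (s + b k - x) * card (partial_flows n c b (Suc k) x))"
proof -
  let ?F = "\<lambda>x. {f \<in> partial_flows n c b k s. f (PathE k) = int x}"
  have card_fiber: "card (?F x) = multichoose (c k) (s + b k - x) * card (partial_flows n c b (Suc k) x)"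
    if "x \<le> s + b k" for x
    using bij_betw_same_card[OF partial_flows_fiber_bij[where s=s and b=b, OF k that]]
    by (simp add: card_cartesian_product card_simplex_points)
  have "finite (?F x)" for x
    using finite_partial_flows[of k n c b s] k by simp
  then have "card (\<Union>x\<le>s + b k. ?F x) = (\<Sum>x\<le>s + b k. card (?F x))"
    by (intro card_UN_disjoint) auto
  then show ?thesis
    by (simp add: partial_flows_eq_UN_fibers[OF k, symmetric] card_fiber)
qed

section \<open>Counting flows vertex by vertex\<close>

lemma sum_multichoose_convolution:
  "(\<Sum>x\<le>M. multichoose c (M - x) * multichoose (Suc x) i) = multichoose (Suc i + c) M"
proof -
  have "(\<Sum>x\<le>M. multichoose c (M - x) * multichoose (Suc x) i)
      = (\<Sum>x\<le>M. multichoose (Suc i) x * multichoose c (M - x))"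
    by (simp add: multichoose_Suc_commute mult.commute)
  also have "\<dots> = multichoose (Suc i + c) M"
    by (rule multichoose_Vandermonde)
  finally show ?thesis .
qed

lemma multichoose_expand_poly:
  "real (multichoose (Suc (c + i)) (s + t * a))
     = (\<Sum>l\<le>c + i. real (multichoose (Suc s) l) * poly (multichoose_poly a (c + i - l)) (real t))"
proof -
  have "multichoose (Suc (c + i)) (s + t * a) = multichoose (Suc s + t * a) (c + i)"
    using multichoose_Suc_commute[of "c + i" "s + t * a"] by simp
  also have "\<dots> = (\<Sum>l\<le>c + i. multichoose (Suc s) l * multichoose (t * a) (c + i - l))"
    by (rule multichoose_Vandermonde[symmetric])
  finally show ?thesis
    by (simp add: poly_multichoose_poly)
qed

lemma sum_multichoose_transfer:
  fixes \<beta> :: "nat \<Rightarrow> real poly" and s t a :: nat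
  defines "M \<equiv> s + t * a"
  shows "(\<Sum>x\<le>M. real (multichoose c (M - x)) * (\<Sum>i\<le>m. poly (\<beta> i) (real t) * real (multichoose (Suc x) i)))
       = (\<Sum>l\<le>m + c. poly (transfer \<beta> m c a l) (real t) * real (multichoose (Suc s) l))"
proof -
  let ?T = "real t"
  let ?term = "\<lambda>i l. poly (\<beta> i) ?T * real (multichoose (Suc s) l) * poly (multichoose_poly a (c + i - l)) ?T"
  have "(\<Sum>x\<le>M. real (multichoose c (M - x)) * (\<Sum>i\<le>m. poly (\<beta> i) ?T * real (multichoose (Suc x) i)))
      = (\<Sum>i\<le>m. poly (\<beta> i) ?T * real (\<Sum>x\<le>M. multichoose c (M - x) * multichoose (Suc x) i))"
    by (simp add: sum_distrib_left sum_distrib_right mult_ac sum.swap[of _ "{..M}"])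
  also have "\<dots> = (\<Sum>i\<le>m. poly (\<beta> i) ?T * real (multichoose (Suc (c + i)) M))"
    by (simp add: sum_multichoose_convolution add_ac)
  also have "\<dots> = (\<Sum>i\<le>m. \<Sum>l\<le>c + i. ?term i l)"
    unfolding M_def multichoose_expand_poly by (simp add: sum_distrib_left mult_ac)
  also have "\<dots> = (\<Sum>i\<le>m. \<Sum>l\<le>m + c. if l \<le> c + i then ?term i l else 0)"
    by (intro sum.cong refl sum.mono_neutral_cong_left) auto
  also have "\<dots> = (\<Sum>l\<le>m + c. \<Sum>i\<le>m. if l \<le> c + i then ?term i l else 0)"
    by (rule sum.swap)
  also have "\<dots> = (\<Sum>l\<le>m + c. poly (transfer \<beta> m c a l) ?T * real (multichoose (Suc s) l))"
    unfolding transfer_def poly_sum sum_distrib_right by (intro sum.cong refl) auto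
  finally show ?thesis .
qed

text \<open>After \<open>d\<close> steps the weights describe the vertex \<open>n + 2 - d\<close>; the vertices are processed
  from the sink \<open>n + 2\<close> towards the source \<open>1\<close>.\<close>

fun extra_count :: "nat \<Rightarrow> (nat \<Rightarrow> nat) \<Rightarrow> nat \<Rightarrow> nat" where
  "extra_count n c 0 = 0"
| "extra_count n c (Suc d) = extra_count n c d + c (n + 1 - d)"

fun flow_weights :: "nat \<Rightarrow> (nat \<Rightarrow> nat) \<Rightarrow> (nat \<Rightarrow> nat) \<Rightarrow> nat \<Rightarrow> nat \<Rightarrow> real poly" where
  "flow_weights n c a 0 = (\<lambda>l. if l = 0 then 1 else 0)"
| "flow_weights n c a (Suc d) =
     transfer (flow_weights n c a d) (extra_count n c d) (c (n + 1 - d)) (a (n + 1 - d))"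

lemma diagonal_positive_flow_weights: "\<exists>D. diagonal_positive (flow_weights n c a d) (extra_count n c d) D"
proof (induction d)
  case 0
  have "diagonal_positive (flow_weights n c a 0) (extra_count n c 0) 0"
    by (simp add: diagonal_positive_def nonneg_coeffs_def)
  then show ?case by blast
next
  case (Suc d)
  then show ?case
    using diagonal_positive_transfer by auto
qed

lemma card_partial_flows_eq_flow_weights:
  assumes "d \<le> n + 1"
  shows "real (card (partial_flows n c (\<lambda>k. t * a k) (n + 2 - d) s))
    = (\<Sum>l\<le>extra_count n c d. poly (flow_weights n c a d l) (real t) * real (multichoose (Suc s) l))"
  using assms
proof (induction d arbitrary: s)
  case 0
  then show ?case
    by (simp add: partial_flows_top)
next
  case (Suc d)
  define k where "k = n + 1 - d"
  have k: "k \<in> {1..n+1}" and "n + 2 - d = Suc k" and "n + 2 - Suc d = k"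
    using Suc.prems by (auto simp: k_def)
  then have "real (card (partial_flows n c (\<lambda>k. t * a k) (n + 2 - Suc d) s))
    = (\<Sum>x\<le>s + t * a k. real (multichoose (c k) (s + t * a k - x)) *
         (\<Sum>l\<le>extra_count n c d. poly (flow_weights n c a d l) (real t) * real (multichoose (Suc x) l)))"
    using Suc by (simp add: card_partial_flows_step)
  also have "\<dots> = (\<Sum>l\<le>extra_count n c (Suc d).
                   poly (flow_weights n c a (Suc d) l) (real t) * real (multichoose (Suc s) l))"
    by (simp add: sum_multichoose_transfer k_def)
  finally show ?case .
qed

theorem corollary6p20:
  fixes n :: nat and c :: "nat \<Rightarrow> nat" and a :: "nat \<Rightarrow> nat"
  shows "\<exists>p :: real poly.
     (\<forall>t :: nat. real (K_flow (Pi_edges n c) Pi_tail (Pi_head n) (n + 2)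
                         (\<lambda>k. int t * int (a k))) = poly p (real t))
     \<and> (\<forall>i \<le> degree p. coeff p i > 0)"
proof -
  define p where "p = (\<Sum>l\<le>extra_count n c (n + 1). flow_weights n c a (n + 1) l)"
  have "real (K_flow (Pi_edges n c) Pi_tail (Pi_head n) (n + 2) (\<lambda>k. int t * int (a k)))
      = poly p (real t)" for t
  proof -
    have "K_flow (Pi_edges n c) Pi_tail (Pi_head n) (n + 2) (\<lambda>k. int t * int (a k))
        = card (partial_flows n c (\<lambda>k. t * a k) 1 0)"
      using integer_flows_eq_partial_flows[of n c "\<lambda>k. t * a k"] by (simp add: K_flow_def)
    then show ?thesis
      using card_partial_flows_eq_flow_weights[of "n + 1" n c t a 0] by (simp add: p_def poly_sum)
  qed
  moreover have "\<forall>i \<le> degree p. coeff p i > 0"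
    unfolding p_def using diagonal_positive_flow_weights diagonal_positive_sum_coeff_pos by blast
  ultimately show ?thesis by blast
qed

end
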